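(* Let $\mathcal{L}$ be a nonempty set and let $\mathcal{C}: 2^{\mathcal{L}} \to 2^{\mathcal{L}}$ be a C-logics. Then there is a restricted fC-model $\langle \mathcal{M}, \models, f\rangle$ for $\mathcal{L}$ such that $\mathcal{C}(A) = \overline{f(\widehat{A})}$ for every $A \subseteq \mathcal{L}$.
   Context: A C-logics on a nonempty set $\mathcal{L}$ is a map $\mathcal{C}: 2^{\mathcal{L}} \to 2^{\mathcal{L}}$ satisfying Inclusion ($A \subseteq \mathcal{C}(A)$ for all $A$) and Cumulativity ($A \subseteq B \subseteq \mathcal{C}(A) \Rightarrow \mathcal{C}(A) = \mathcal{C}(B)$). An fC-model for $\mathcal{L}$ is a triple $\langle \mathcal{M}, \models, f\rangle$ where $\mathcal{M}$ is any set, $\models \subseteq \mathcal{M}\times\mathcal{L}$ is any binary relation, and $f: 2^{\mathcal{M}} \to 2^{\mathcal{M}}$ is defined on all subsets of $\mathcal{M}$ and satisfies, for all $X, Y \subseteq \mathcal{M}$: Contraction $f(X) \subseteq X$, and Local Cumulativity $f(X) \subseteq Y \subseteq X \Rightarrow f(Y) = f(X)$. It is restricted if moreover $f(X) = \emptyset \Rightarrow X = \emptyset$ for all $X \subseteq \mathcal{M}$. For $A \subseteq \mathcal{L}$, $\widehat{A} = \{x \in \mathcal{M} : x \models a \ \forall a \in A\}$; for $X \subseteq \mathcal{M}$, $\overline{X} = \{a \in \mathcal{L} : x \models a \ \forall x \in X\}$. *)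

theory Defs
  imports Main
begin

definition C_logic :: "'a set \<Rightarrow> ('a set \<Rightarrow> 'a set) \<Rightarrow> bool" where
  "C_logic L C \<longleftrightarrow>
     (\<forall>A. A \<subseteq> L \<longrightarrow> C A \<subseteq> L) \<and>
     (\<forall>A. A \<subseteq> L \<longrightarrow> A \<subseteq> C A) \<and>
     (\<forall>A B. A \<subseteq> L \<longrightarrow> B \<subseteq> L \<longrightarrow> A \<subseteq> B \<longrightarrow> B \<subseteq> C A \<longrightarrow> C A = C B)"

definition fC_model :: "'a set \<Rightarrow> 'm set \<Rightarrow> ('m \<Rightarrow> 'a \<Rightarrow> bool) \<Rightarrow> ('m set \<Rightarrow> 'm set) \<Rightarrow> bool" where
  "fC_model L M sat f \<longleftrightarrow>
     (\<forall>x a. sat x a \<longrightarrow> x \<in> M \<and> a \<in> L) \<and>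
     (\<forall>X. X \<subseteq> M \<longrightarrow> f X \<subseteq> X) \<and>
     (\<forall>X Y. X \<subseteq> M \<longrightarrow> Y \<subseteq> M \<longrightarrow> f X \<subseteq> Y \<longrightarrow> Y \<subseteq> X \<longrightarrow> f Y = f X)"

definition restricted_fC_model :: "'a set \<Rightarrow> 'm set \<Rightarrow> ('m \<Rightarrow> 'a \<Rightarrow> bool) \<Rightarrow> ('m set \<Rightarrow> 'm set) \<Rightarrow> bool" where
  "restricted_fC_model L M sat f \<longleftrightarrow>
     fC_model L M sat f \<and> (\<forall>X. X \<subseteq> M \<longrightarrow> f X = {} \<longrightarrow> X = {})"

text \<open>hat A = models of all formulas in A; bar X = formulas true in all models in X.\<close>
definition mods :: "'m set \<Rightarrow> ('m \<Rightarrow> 'a \<Rightarrow> bool) \<Rightarrow> 'a set \<Rightarrow> 'm set" where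
  "mods M sat A = {x \<in> M. \<forall>a\<in>A. sat x a}"

definition theory_of :: "'a set \<Rightarrow> ('m \<Rightarrow> 'a \<Rightarrow> bool) \<Rightarrow> 'm set \<Rightarrow> 'a set" where
  "theory_of L sat X = {a \<in> L. \<forall>x\<in>X. sat x a}"

end

theory Submission
  imports Defs
begin

text \<open>Take as models the subsets of L, a formula being satisfied by a set when it belongs to it.
  For a set X of models let I(X) be the formulas common to all of them; f selects the single
  model C(I(X)) when it lies in X and keeps X otherwise. Since the models of A have exactly A in
  common and C(A) is one of them, f picks out {C(A)}, whose theory is C(A). Local cumulativity of f
  is cumulativity of C applied to I(X) \<subseteq> I(Y) \<subseteq> C(I(X)).\<close>

lemma C_logic_closed:
  assumes "C_logic L C" and "A \<subseteq> L"
  shows "C A \<subseteq> L"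
proof -
  have "\<forall>A. A \<subseteq> L \<longrightarrow> C A \<subseteq> L"
    using assms(1) unfolding C_logic_def by (rule conjunct1)
  with assms(2) show ?thesis by blast
qed

lemma C_logic_inclusion:
  assumes "C_logic L C" and "A \<subseteq> L"
  shows "A \<subseteq> C A"
proof -
  have "\<forall>A. A \<subseteq> L \<longrightarrow> A \<subseteq> C A"
    using assms(1) unfolding C_logic_def by (elim conjE)
  with assms(2) show ?thesis by blast
qed

lemma C_logic_cumulative:
  assumes "C_logic L C" and "B \<subseteq> L" and "A \<subseteq> B" and "B \<subseteq> C A"
  shows "C A = C B"
proof -
  have "\<forall>A B. A \<subseteq> L \<longrightarrow> B \<subseteq> L \<longrightarrow> A \<subseteq> B \<longrightarrow> B \<subseteq> C A \<longrightarrow> C A = C B"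
    using assms(1) unfolding C_logic_def by (elim conjE)
  moreover have "A \<subseteq> L"
    using assms(3,2) by (rule order_trans)
  ultimately show ?thesis
    using assms(2-4) by metis
qed

definition canonical_sat :: "'a set \<Rightarrow> 'a set \<Rightarrow> 'a \<Rightarrow> bool" where
  "canonical_sat L T a \<longleftrightarrow> T \<subseteq> L \<and> a \<in> T"

text \<open>The intersection with L only matters for X = {}, where the empty intersection is UNIV.\<close>
definition canonical_selection :: "'a set \<Rightarrow> ('a set \<Rightarrow> 'a set) \<Rightarrow> 'a set set \<Rightarrow> 'a set set" where
  "canonical_selection L C X = (if C (L \<inter> \<Inter>X) \<in> X then {C (L \<inter> \<Inter>X)} else X)"

lemma mods_canonical_sat:
  "A \<subseteq> L \<Longrightarrow> mods (Pow L) (canonical_sat L) A = {T. A \<subseteq> T \<and> T \<subseteq> L}"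
  unfolding mods_def canonical_sat_def by auto

lemma theory_of_canonical_sat_singleton:
  "T \<subseteq> L \<Longrightarrow> theory_of L (canonical_sat L) {T} = T"
  unfolding theory_of_def canonical_sat_def by auto

lemma canonical_selection_local_cumulative:
  assumes "C_logic L C" and "canonical_selection L C X \<subseteq> Y" and "Y \<subseteq> X"
  shows "canonical_selection L C Y = canonical_selection L C X"
proof (cases "C (L \<inter> \<Inter>X) \<in> X")
  case True
  then have in_Y: "C (L \<inter> \<Inter>X) \<in> Y"
    using assms(2) unfolding canonical_selection_def by simp
  have "C (L \<inter> \<Inter>X) = C (L \<inter> \<Inter>Y)"
  proof (rule C_logic_cumulative[OF assms(1)])
    show "L \<inter> \<Inter>X \<subseteq> L \<inter> \<Inter>Y" using assms(3) by blast
    show "L \<inter> \<Inter>Y \<subseteq> C (L \<inter> \<Inter>X)" using in_Y by blast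
  qed blast
  with True in_Y show ?thesis
    unfolding canonical_selection_def by simp
next
  case False
  with assms(2,3) show ?thesis
    unfolding canonical_selection_def by simp
qed

lemma restricted_fC_model_canonical:
  assumes "C_logic L C"
  shows "restricted_fC_model L (Pow L) (canonical_sat L) (canonical_selection L C)"
proof -
  have "\<forall>x a. canonical_sat L x a \<longrightarrow> x \<in> Pow L \<and> a \<in> L"
    unfolding canonical_sat_def by blast
  moreover have "\<forall>X. X \<subseteq> Pow L \<longrightarrow> canonical_selection L C X \<subseteq> X"
    unfolding canonical_selection_def by simp
  moreover have "\<forall>X Y. X \<subseteq> Pow L \<longrightarrow> Y \<subseteq> Pow L \<longrightarrow> canonical_selection L C X \<subseteq> Y \<longrightarrow>
      Y \<subseteq> X \<longrightarrow> canonical_selection L C Y = canonical_selection L C X"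
    using canonical_selection_local_cumulative[OF assms] by simp
  moreover have "\<forall>X. X \<subseteq> Pow L \<longrightarrow> canonical_selection L C X = {} \<longrightarrow> X = {}"
    unfolding canonical_selection_def by simp
  ultimately show ?thesis
    unfolding restricted_fC_model_def fC_model_def by (intro conjI)
qed

lemma canonical_selection_mods:
  assumes "C_logic L C" and "A \<subseteq> L"
  shows "canonical_selection L C (mods (Pow L) (canonical_sat L) A) = {C A}"
proof -
  have "A \<in> {T. A \<subseteq> T \<and> T \<subseteq> L}"
    using assms(2) by simp
  then have common: "L \<inter> \<Inter>{T. A \<subseteq> T \<and> T \<subseteq> L} = A"
    using assms(2) by (auto intro: Inter_lower)
  have "C A \<in> {T. A \<subseteq> T \<and> T \<subseteq> L}"
    using assms(2) C_logic_inclusion[OF assms] C_logic_closed[OF assms] by simp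
  with common show ?thesis
    unfolding mods_canonical_sat[OF assms(2)] canonical_selection_def by simp
qed

theorem theorem2:
  fixes L :: "'a set" and C :: "'a set \<Rightarrow> 'a set"
  assumes "L \<noteq> {}" and "C_logic L C"
  shows "\<exists>(M :: 'a set set) sat f. restricted_fC_model L M sat f \<and>
           (\<forall>A. A \<subseteq> L \<longrightarrow> C A = theory_of L sat (f (mods M sat A)))"
proof (intro exI conjI allI impI)
  show "restricted_fC_model L (Pow L) (canonical_sat L) (canonical_selection L C)"
    using restricted_fC_model_canonical[OF assms(2)] .
next
  fix A assume "A \<subseteq> L"
  then show "C A = theory_of L (canonical_sat L)
                     (canonical_selection L C (mods (Pow L) (canonical_sat L) A))"
    by (simp add: canonical_selection_mods[OF assms(2)]
        theory_of_canonical_sat_singleton[OF C_logic_closed[OF assms(2)]])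
qed

end
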